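(* Let $G$ be a finite group of nilpotency class at most $2$. Let $e=\exp(G)$, $e'=\exp([G,G])$ and $f=\exp(G/Z(G))$. Then $$W:=\{x^m[x,y^n]\in F_2:\ m\mid e,\ n\mid f,\ n\le e'\}$$ is a $2$-exhaustive set for word images on $G$; that is, for every $v\in F_2$ there exists $w\in W$ with $v(G)=w(G)$.
   Context: $[a,b]=aba^{-1}b^{-1}$; $x,y$ are the free generators of $F_2$; for $w\in F_2$, $w(G)=\{w(a,b):a,b\in G\}$. Nilpotency class at most 2 means $[G,G]\subseteq Z(G)$. A subset $W\subseteq F_d$ is a $d$-exhaustive set for word images on $G$ if for every $v\in F_d$ there is $w\in W$ with $v(G)=w(G)$. *)

theory Defs
  imports "HOL-Algebra.Algebra"
begin

definition grp_center :: "('a, 'b) monoid_scheme \<Rightarrow> 'a set" where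
  "grp_center G = {z \<in> carrier G. \<forall>g \<in> carrier G. z \<otimes>\<^bsub>G\<^esub> g = g \<otimes>\<^bsub>G\<^esub> z}"

definition grp_exp :: "('a, 'b) monoid_scheme \<Rightarrow> nat" where
  "grp_exp G = (LEAST n. 0 < n \<and> (\<forall>g \<in> carrier G. g [^]\<^bsub>G\<^esub> n = \<one>\<^bsub>G\<^esub>))"

text \<open>Words in the free group F_2 on generators x, y, represented as lists of
  letters (gen, inv): gen = False is x, gen = True is y; inv = True means the
  inverse letter. Every element of F_2 is represented by such a list, and the
  word map only depends on the represented element.\<close>
type_synonym word2 = "(bool \<times> bool) list"

definition letter_eval :: "('a, 'b) monoid_scheme \<Rightarrow> 'a \<Rightarrow> 'a \<Rightarrow> bool \<times> bool \<Rightarrow> 'a" where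
  "letter_eval G a b l =
     (let g = (if fst l then b else a) in if snd l then inv\<^bsub>G\<^esub> g else g)"

definition word_eval :: "('a, 'b) monoid_scheme \<Rightarrow> word2 \<Rightarrow> 'a \<Rightarrow> 'a \<Rightarrow> 'a" where
  "word_eval G w a b = foldr (\<lambda>l acc. letter_eval G a b l \<otimes>\<^bsub>G\<^esub> acc) w \<one>\<^bsub>G\<^esub>"

definition word_image :: "('a, 'b) monoid_scheme \<Rightarrow> word2 \<Rightarrow> 'a set" where
  "word_image G w = {word_eval G w a b | a b. a \<in> carrier G \<and> b \<in> carrier G}"

definition wx :: word2 where "wx = [(False, False)]"
definition wy :: word2 where "wy = [(True, False)]"
definition winv :: "word2 \<Rightarrow> word2" where
  "winv w = rev (map (\<lambda>(g, i). (g, \<not> i)) w)"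
definition wpow :: "word2 \<Rightarrow> nat \<Rightarrow> word2" where
  "wpow w n = concat (replicate n w)"
definition wcomm :: "word2 \<Rightarrow> word2 \<Rightarrow> word2" where
  "wcomm u v = u @ v @ winv u @ winv v"

definition exhaustive2 :: "('a, 'b) monoid_scheme \<Rightarrow> word2 set \<Rightarrow> bool" where
  "exhaustive2 G W \<longleftrightarrow> (\<forall>v. \<exists>w \<in> W. word_image G v = word_image G w)"

end

theory Submission
  imports Defs "HOL-Computational_Algebra.Primes"
begin

text \<open>In a group of class 2 every word \<open>w(x, y)\<close> evaluates to \<open>[x,y]^c x^a y^b\<close> for a triple
  \<open>(a, b, c)\<close> depending only on \<open>w\<close>, so the word image only depends on this triple. Substituting
  words \<open>s\<^sub>1, s\<^sub>2\<close> for \<open>x, y\<close> can only shrink the image, and keeps it when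
  \<open>(g, h) \<mapsto> (s\<^sub>1(g, h), s\<^sub>2(g, h))\<close> is onto \<open>G \<times> G\<close>. Unimodular substitutions turn
  \<open>(a, b, c)\<close> into \<open>(gcd a b, 0, c')\<close>. As \<open>x \<mapsto> x^k\<close> is bijective for \<open>k\<close> prime to \<open>e\<close>,
  substituting \<open>x^k\<close> or \<open>y^k\<close> for suitable such \<open>k\<close> replaces the first entry by its gcd with \<open>e\<close>
  and the last one by its gcd with \<open>f\<close>, which kills all commutators since \<open>[x, y]^f = [x, y^f]\<close>
  and \<open>y^f\<close> is central. Finally \<open>f \<le> e'\<close> because \<open>[x, y^e'] = [x, y]^e' = 1\<close>.\<close>

section \<open>Arithmetic\<close>

lemma gcd_cofactors:
  fixes a b :: int
  obtains a' b' p q where "a = gcd a b * a'" "b = gcd a b * b'" "a' * p + b' * q = 1"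
proof (cases "gcd a b = 0")
  case True
  then show thesis
    using that[of 1 0 1 0] by simp
next
  case False
  define d where "d = gcd a b"
  obtain a' b' where ab: "a = d * a'" "b = d * b'"
    unfolding d_def by (meson gcd_dvd1 gcd_dvd2 dvdE)
  obtain p q where "p * a + q * b = d"
    unfolding d_def using bezout_int by blast
  then have "d * (a' * p + b' * q) = d * 1"
    using ab by (simp add: algebra_simps)
  moreover have "d \<noteq> 0"
    using False by (simp add: d_def)
  ultimately have "a' * p + b' * q = 1"
    by simp
  then show thesis
    using that ab unfolding d_def by blast
qed

lemma coprime_if_no_common_prime_factor:
  fixes a N :: int
  assumes "N \<noteq> 0" and "\<And>p. Factorial_Ring.prime p \<Longrightarrow> p dvd N \<Longrightarrow> \<not> p dvd a"
  shows "coprime a N"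
proof (rule ccontr)
  assume "\<not> coprime a N"
  then obtain d where d: "d dvd a" "d dvd N" "\<not> is_unit d"
    by (rule not_coprimeE)
  then have "d \<noteq> 0"
    using assms(1) by auto
  then obtain p where "Factorial_Ring.prime p" "p dvd d"
    using d(3) by (rule prime_divisorE)
  then show False
    using assms(2) d(1,2) dvd_trans by blast
qed

text \<open>The translate \<open>u + v t\<close> with \<open>t\<close> the product of the primes of \<open>N\<close> not dividing \<open>u\<close> is coprime
  to \<open>N\<close>.\<close>

lemma exists_coprime_translate:
  fixes u v N :: int
  assumes cop: "coprime u v" and N: "N \<noteq> 0"
  shows "\<exists>t. coprime (u + v * t) N"
proof -
  define A where "A = {p \<in> prime_factors N. \<not> p dvd u}"
  define P where "P = \<Prod> A"
  have finA: "finite A"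
    unfolding A_def by simp
  have "\<not> p dvd u + v * P" if p: "Factorial_Ring.prime p" "p dvd N" for p
  proof (cases "p dvd u")
    case True
    have "\<not> p dvd v"
      using True cop p(1) coprime_common_divisor not_prime_unit by blast
    moreover have "\<not> p dvd P"
    proof
      assume "p dvd P"
      then obtain q where q: "q \<in> A" "p dvd q"
        using prime_dvd_prod_iff[OF finA p(1), of id] unfolding P_def by auto
      then have "p = q"
        using p(1) unfolding A_def by (auto intro: primes_dvd_imp_eq)
      then show False
        using q(1) True unfolding A_def by simp
    qed
    ultimately show ?thesis
      using True p(1) by (simp add: prime_dvd_mult_iff dvd_add_right_iff)
  next
    case False
    then have "p \<in> A"
      using p N unfolding A_def by (simp add: in_prime_factors_iff)
    then have "p dvd v * P"
      unfolding P_def using dvd_prodI[OF finA, of p id] by simp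
    then show ?thesis
      using False by (simp add: dvd_add_left_iff)
  qed
  then show ?thesis
    using N by (blast intro: coprime_if_no_common_prime_factor)
qed

lemma exists_coprime_multiplier_gcd:
  fixes c M N :: int
  assumes M: "M > 0" and N: "N > 0"
  shows "\<exists>k. coprime k N \<and> M dvd c * k - gcd c M"
proof -
  define g where "g = gcd c M"
  have g0: "g > 0"
    using M unfolding g_def by simp
  obtain u v where uv: "c = g * u" "M = g * v"
    unfolding g_def by (meson gcd_dvd1 gcd_dvd2 dvdE)
  have "g * gcd u v = gcd c M"
    unfolding uv using g0 by (simp add: gcd_mult_left)
  also have "\<dots> = g"
    by (simp add: g_def)
  finally have "coprime u v"
    using g0 by (simp add: coprime_iff_gcd_eq_1)
  then obtain t where t: "coprime (u + v * t) (N * M)"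
    using exists_coprime_translate[of u v "N * M"] M N by auto
  obtain x y where xy: "x * (u + v * t) + y * (N * M) = 1"
    using bezout_int[of "u + v * t" "N * M"] t by (auto simp: coprime_iff_gcd_eq_1)
  have "coprime x N"
  proof (rule coprimeI)
    fix d assume "d dvd x" "d dvd N"
    then have "d dvd x * (u + v * t) + y * (N * M)"
      by simp
    then show "is_unit d"
      using xy by simp
  qed
  moreover have "c * x - g = M * (- g * y * N - t * x)"
  proof -
    have "g * (x * (u + v * t) + y * (N * (g * v))) = g"
      using xy uv by simp
    then show ?thesis
      using uv by (simp add: algebra_simps)
  qed
  then have "M dvd c * x - g"
    by simp
  ultimately show ?thesis
    unfolding g_def by blast
qed

section \<open>Commutators, centre and exponent\<close>

definition commutator :: "('a, 'b) monoid_scheme \<Rightarrow> 'a \<Rightarrow> 'a \<Rightarrow> 'a" where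
  "commutator G x y = x \<otimes>\<^bsub>G\<^esub> y \<otimes>\<^bsub>G\<^esub> inv\<^bsub>G\<^esub> x \<otimes>\<^bsub>G\<^esub> inv\<^bsub>G\<^esub> y"

context group
begin

lemma commutator_closed [simp]:
  "x \<in> carrier G \<Longrightarrow> y \<in> carrier G \<Longrightarrow> commutator G x y \<in> carrier G"
  by (simp add: commutator_def)

lemma commutator_in_derived:
  "x \<in> carrier G \<Longrightarrow> y \<in> carrier G \<Longrightarrow> commutator G x y \<in> derived G (carrier G)"
  unfolding derived_def commutator_def by (rule generate.incl) blast

lemma commutator_swap:
  "x \<in> carrier G \<Longrightarrow> y \<in> carrier G \<Longrightarrow> commutator G y x = inv (commutator G x y)"
  by (simp add: commutator_def inv_mult_group m_assoc)

lemma mult_eq_commutator_mult: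
  assumes "x \<in> carrier G" "y \<in> carrier G"
  shows "x \<otimes> y = commutator G x y \<otimes> (y \<otimes> x)"
  using assms by (simp add: commutator_def m_assoc inv_solve_left')

lemma commutator_eq_one_iff:
  assumes "x \<in> carrier G" "y \<in> carrier G"
  shows "commutator G x y = \<one> \<longleftrightarrow> x \<otimes> y = y \<otimes> x"
  using mult_eq_commutator_mult[OF assms] assms
  by (metis commutator_closed l_one m_closed r_cancel_one')

lemma grp_center_subset: "grp_center G \<subseteq> carrier G"
  by (auto simp: grp_center_def)

lemma grp_center_commute: "z \<in> grp_center G \<Longrightarrow> x \<in> carrier G \<Longrightarrow> z \<otimes> x = x \<otimes> z"
  by (simp add: grp_center_def)

lemma inv_commute:
  assumes "x \<in> carrier G" "y \<in> carrier G" "x \<otimes> y = y \<otimes> x"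
  shows "inv x \<otimes> y = y \<otimes> inv x"
proof -
  have "inv x \<otimes> y = inv x \<otimes> (y \<otimes> x) \<otimes> inv x"
    using assms by (simp add: m_assoc)
  also have "\<dots> = y \<otimes> inv x"
    using assms by (simp flip: assms(3) add: m_assoc[symmetric])
  finally show ?thesis .
qed

lemma grp_center_left_commute:
  assumes z: "z \<in> grp_center G" and x: "x \<in> carrier G" and y: "y \<in> carrier G"
  shows "x \<otimes> (z \<otimes> y) = z \<otimes> (x \<otimes> y)"
proof -
  have "z \<in> carrier G"
    using z grp_center_subset by blast
  then show ?thesis
    using x y by (simp flip: m_assoc add: grp_center_commute[OF z x])
qed

lemma subgroup_grp_center: "subgroup (grp_center G) G"
proof (rule subgroupI)
  fix z w assume z: "z \<in> grp_center G" and w: "w \<in> grp_center G"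
  then have zw: "z \<in> carrier G" "w \<in> carrier G"
    using grp_center_subset by blast+
  have "inv z \<otimes> g = g \<otimes> inv z" if g: "g \<in> carrier G" for g
    using zw g by (intro inv_commute grp_center_commute[OF z]) auto
  then show "inv z \<in> grp_center G"
    unfolding grp_center_def using zw by blast
  have "z \<otimes> w \<otimes> g = g \<otimes> (z \<otimes> w)" if g: "g \<in> carrier G" for g
    using zw g by (simp add: m_assoc grp_center_commute[OF w g] grp_center_left_commute[OF z])
  then show "z \<otimes> w \<in> grp_center G"
    unfolding grp_center_def using zw by blast
qed (auto simp: grp_center_def)

lemma normal_grp_center: "grp_center G \<lhd> G"
proof -
  have "x \<otimes> z \<otimes> inv x \<in> grp_center G" if x: "x \<in> carrier G" and z: "z \<in> grp_center G" for x z
  proof -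
    have "z \<in> carrier G"
      using z grp_center_subset by blast
    then have "x \<otimes> z \<otimes> inv x = z"
      using x by (simp add: grp_center_commute[OF z x, symmetric] m_assoc)
    then show ?thesis
      using z by simp
  qed
  then show ?thesis
    by (simp add: normal_inv_iff subgroup_grp_center)
qed

lemma grp_center_iff_commutator:
  "z \<in> grp_center G \<longleftrightarrow> z \<in> carrier G \<and> (\<forall>g \<in> carrier G. commutator G g z = \<one>)"
  by (auto simp: grp_center_def commutator_eq_one_iff)

end

lemma grp_exp_least:
  assumes "0 < n" and "\<forall>g \<in> carrier H. g [^]\<^bsub>H\<^esub> n = \<one>\<^bsub>H\<^esub>"
  shows "0 < grp_exp H" and "\<forall>g \<in> carrier H. g [^]\<^bsub>H\<^esub> grp_exp H = \<one>\<^bsub>H\<^esub>"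
    and "grp_exp H \<le> n"
proof -
  let ?P = "\<lambda>n::nat. 0 < n \<and> (\<forall>g \<in> carrier H. g [^]\<^bsub>H\<^esub> n = \<one>\<^bsub>H\<^esub>)"
  have "?P n"
    using assms by blast
  then have "?P (grp_exp H)" "grp_exp H \<le> n"
    unfolding grp_exp_def by (rule LeastI, rule Least_le)
  then show "0 < grp_exp H" "\<forall>g \<in> carrier H. g [^]\<^bsub>H\<^esub> grp_exp H = \<one>\<^bsub>H\<^esub>" "grp_exp H \<le> n"
    by auto
qed

lemma nat_pow_carrier_update: "x [^]\<^bsub>G\<lparr>carrier := H\<rparr>\<^esub> (n::nat) = x [^]\<^bsub>G\<^esub> n"
  by (simp add: nat_pow_def)

context group
begin

lemma grp_exp_finite:
  assumes "finite (carrier G)"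
  shows "0 < grp_exp G" and "g \<in> carrier G \<Longrightarrow> g [^] grp_exp G = \<one>"
proof -
  have "0 < order G"
    using assms by (simp add: order_gt_0_iff_finite)
  then show "0 < grp_exp G" "g \<in> carrier G \<Longrightarrow> g [^] grp_exp G = \<one>"
    using grp_exp_least[of "order G" G] pow_order_eq_1 by auto
qed

lemma int_pow_eq_mod:
  assumes "x \<in> carrier G" "x [^] (n::nat) = \<one>" "int n dvd i - j"
  shows "x [^] (i::int) = x [^] j"
  using assms by (metis dvd_trans int_pow_eq of_nat_dvd_iff pow_eq_id)

lemma int_pow_root_exists:
  assumes "\<forall>g \<in> carrier G. g [^] (n::nat) = \<one>" "coprime k (int n)" "u \<in> carrier G"
  shows "\<exists>g \<in> carrier G. g [^] k = u"
proof -
  obtain k' l where "k' * k + l * int n = 1"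
    using bezout_int[of k "int n"] assms(2) by (auto simp: coprime_iff_gcd_eq_1)
  then have "int n dvd k' * k - 1"
    by (metis add_diff_cancel_left' diff_diff_eq2 dvd_triv_right dvd_minus_iff minus_diff_eq)
  then have "(u [^] k') [^] k = u"
    using assms(1,3) int_pow_eq_mod[of u n "k' * k" 1] by (simp add: int_pow_pow)
  then show ?thesis
    using assms(3) by blast
qed

lemma FactGroup_pow_eq_one_iff:
  assumes "N \<lhd> G" "h \<in> carrier G"
  shows "(N #> h) [^]\<^bsub>G Mod N\<^esub> (n::nat) = N \<longleftrightarrow> h [^] n \<in> N"
proof -
  have "subgroup N G"
    using assms(1) by (rule normal_imp_subgroup)
  then show ?thesis
    using assms normal.FactGroup_pow[OF assms] coset_join1 coset_join2 by (metis nat_pow_closed)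
qed

lemma grp_exp_FactGroup:
  assumes "N \<lhd> G" "0 < n" "\<forall>h \<in> carrier G. h [^] (n::nat) \<in> N"
  shows "0 < grp_exp (G Mod N)" and "h \<in> carrier G \<Longrightarrow> h [^] grp_exp (G Mod N) \<in> N"
    and "grp_exp (G Mod N) \<le> n"
proof -
  have pow_iff: "(\<forall>Q \<in> carrier (G Mod N). Q [^]\<^bsub>G Mod N\<^esub> m = \<one>\<^bsub>G Mod N\<^esub>)
      \<longleftrightarrow> (\<forall>h \<in> carrier G. h [^] m \<in> N)" for m :: nat
    using FactGroup_pow_eq_one_iff[OF assms(1)] by (simp add: carrier_FactGroup)
  show "0 < grp_exp (G Mod N)" "grp_exp (G Mod N) \<le> n"
    using grp_exp_least[of n "G Mod N"] assms(2,3) pow_iff by auto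
  show "h \<in> carrier G \<Longrightarrow> h [^] grp_exp (G Mod N) \<in> N"
    using grp_exp_least(2)[of n "G Mod N"] assms(2,3) pow_iff by auto
qed

end

section \<open>Groups of nilpotency class 2\<close>

locale class2_group = group +
  assumes derived_subset_center: "derived G (carrier G) \<subseteq> grp_center G"
begin

lemma commutator_central:
  "x \<in> carrier G \<Longrightarrow> y \<in> carrier G \<Longrightarrow> commutator G x y \<in> grp_center G"
  using commutator_in_derived derived_subset_center by blast

lemma commutator_mult_left:
  assumes x: "x \<in> carrier G" and x': "x' \<in> carrier G" and y: "y \<in> carrier G"
  shows "commutator G (x \<otimes> x') y = commutator G x y \<otimes> commutator G x' y"
proof -
  define c where "c = commutator G x' y"
  have c: "c \<in> grp_center G" "c \<in> carrier G"
    unfolding c_def using x' y commutator_central by simp_all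
  have "commutator G (x \<otimes> x') y = x \<otimes> ((x' \<otimes> y \<otimes> inv x') \<otimes> (inv x \<otimes> inv y))"
    using assms by (simp add: commutator_def m_assoc inv_mult_group)
  also have "x' \<otimes> y \<otimes> inv x' = c \<otimes> y"
    using x' y by (simp add: c_def commutator_def m_assoc)
  also have "x \<otimes> (c \<otimes> y \<otimes> (inv x \<otimes> inv y)) = c \<otimes> commutator G x y"
    using x y c by (simp add: commutator_def m_assoc grp_center_left_commute)
  also have "\<dots> = commutator G x y \<otimes> c"
    using x y by (simp add: grp_center_commute[OF c(1)])
  finally show ?thesis
    unfolding c_def .
qed

lemma commutator_int_pow_left:
  assumes "x \<in> carrier G" "y \<in> carrier G"
  shows "commutator G (x [^] (k::int)) y = commutator G x y [^] k"
proof -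
  have "(\<lambda>x. commutator G x y) \<in> hom G G"
    using assms by (auto intro!: homI simp: commutator_mult_left)
  then show ?thesis
    using hom_int_pow[of "\<lambda>x. commutator G x y" G G x k] assms is_group by simp
qed

lemma commutator_int_pow_right:
  assumes "x \<in> carrier G" "y \<in> carrier G"
  shows "commutator G x (y [^] (k::int)) = commutator G x y [^] k"
proof -
  have "commutator G x (y [^] k) = inv (commutator G y x [^] k)"
    using assms by (simp add: commutator_swap[of "y [^] k" x] commutator_int_pow_left)
  also have "\<dots> = commutator G x y [^] k"
    using assms by (simp add: commutator_swap[of y x] int_pow_inv[symmetric])
  finally show ?thesis .
qed

lemma commutator_nat_pow_right:
  "x \<in> carrier G \<Longrightarrow> y \<in> carrier G \<Longrightarrow> commutator G x (y [^] (n::nat)) = commutator G x y [^] n"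
  using commutator_int_pow_right[of x y "int n"] by (simp add: int_pow_int)

lemma commutator_int_pow:
  assumes "x \<in> carrier G" "y \<in> carrier G"
  shows "commutator G (x [^] (a::int)) (y [^] (b::int)) = commutator G x y [^] (a * b)"
  using assms by (simp add: commutator_int_pow_left commutator_int_pow_right int_pow_pow mult.commute)

lemma commutator_int_pow_central:
  "x \<in> carrier G \<Longrightarrow> y \<in> carrier G \<Longrightarrow> commutator G x y [^] (k::int) \<in> grp_center G"
  by (simp add: commutator_central subgroup_grp_center subgroup_int_pow_closed)

end

section \<open>Heisenberg coordinates\<close>

definition tri :: "int \<Rightarrow> int" where
  "tri k = k * (k - 1) div 2"

lemma two_times_tri: "2 * tri k = k * (k - 1)"
proof -
  have "even (k * (k - 1))"
    by (cases "even k") auto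
  then show ?thesis
    unfolding tri_def by simp
qed

lemma tri_add_one: "tri (k + 1) = tri k + k"
  using two_times_tri[of k] two_times_tri[of "k + 1"] by (simp add: algebra_simps)

lemma tri_uminus: "tri (- k) = k * k - tri k"
  using two_times_tri[of k] two_times_tri[of "- k"] by (simp add: algebra_simps)

text \<open>A triple \<open>(a, b, c)\<close> stands for the normal form \<open>[x,y]^c x^a y^b\<close> of an element of the free
  nilpotent group of class 2 on \<open>x, y\<close> (the integer Heisenberg group); the functions below are its
  group law, powers (\<open>tri k\<close> counts the commutators collected in \<open>(x^a y^b)^k\<close>) and the
  substitution \<open>x \<mapsto> s\<^sub>1, y \<mapsto> s\<^sub>2\<close>.\<close>

type_synonym heis = "int \<times> int \<times> int"

fun heis_mult :: "heis \<Rightarrow> heis \<Rightarrow> heis" where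
  "heis_mult (a1, b1, c1) (a2, b2, c2) = (a1 + a2, b1 + b2, c1 + c2 - b1 * a2)"

fun heis_inv :: "heis \<Rightarrow> heis" where
  "heis_inv (a, b, c) = (- a, - b, - c - a * b)"

fun heis_pow :: "int \<Rightarrow> heis \<Rightarrow> heis" where
  "heis_pow k (a, b, c) = (k * a, k * b, k * c - a * b * tri k)"

fun heis_subst :: "heis \<Rightarrow> heis \<Rightarrow> heis \<Rightarrow> heis" where
  "heis_subst (a, b, c) (a1, b1, c1) (a2, b2, c2) =
     (a * a1 + b * a2, a * b1 + b * b2,
      a * c1 + b * c2 - a1 * b1 * tri a - a2 * b2 * tri b - a * b * b1 * a2 + c * (a1 * b2 - b1 * a2))"

fun heis_eval :: "('a, 'b) monoid_scheme \<Rightarrow> 'a \<Rightarrow> 'a \<Rightarrow> heis \<Rightarrow> 'a" where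
  "heis_eval G g h (a, b, c) =
     commutator G g h [^]\<^bsub>G\<^esub> c \<otimes>\<^bsub>G\<^esub> (g [^]\<^bsub>G\<^esub> a \<otimes>\<^bsub>G\<^esub> h [^]\<^bsub>G\<^esub> b)"

context class2_group
begin

lemma heis_eval_closed [simp]:
  "g \<in> carrier G \<Longrightarrow> h \<in> carrier G \<Longrightarrow> heis_eval G g h t \<in> carrier G"
  by (cases t) simp

lemma heis_eval_x [simp]:
  "g \<in> carrier G \<Longrightarrow> h \<in> carrier G \<Longrightarrow> heis_eval G g h (1, 0, 0) = g"
  by simp

lemma heis_eval_y [simp]:
  "g \<in> carrier G \<Longrightarrow> h \<in> carrier G \<Longrightarrow> heis_eval G g h (0, 1, 0) = h"
  by simp

lemma int_pow_swap:
  assumes g: "g \<in> carrier G" and h: "h \<in> carrier G"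
  shows "h [^] b \<otimes> g [^] a = commutator G g h [^] (- (b * a)) \<otimes> (g [^] a \<otimes> h [^] (b::int))"
proof -
  have "commutator G (h [^] b) (g [^] (a::int)) = inv (commutator G g h) [^] (b * a)"
    using assms by (simp add: commutator_int_pow commutator_swap[of g h])
  also have "\<dots> = commutator G g h [^] (- (b * a))"
    using assms by (simp add: int_pow_inv int_pow_neg)
  finally show ?thesis
    using assms mult_eq_commutator_mult[of "h [^] b" "g [^] a"] by simp
qed

lemma heis_eval_mult:
  assumes g: "g \<in> carrier G" and h: "h \<in> carrier G"
  shows "heis_eval G g h s \<otimes> heis_eval G g h t = heis_eval G g h (heis_mult s t)"
proof -
  obtain a1 b1 c1 a2 b2 c2 where st: "s = (a1, b1, c1)" "t = (a2, b2, c2)"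
    by (cases s, cases t)
  define C where "C = commutator G g h"
  have CZ: "C [^] (k::int) \<in> grp_center G" for k
    unfolding C_def using g h by (rule commutator_int_pow_central)
  then have C: "C [^] (k::int) \<in> carrier G" for k
    using grp_center_subset by blast
  have "g [^] a1 \<otimes> h [^] b1 \<otimes> (g [^] a2 \<otimes> h [^] b2) = g [^] a1 \<otimes> (h [^] b1 \<otimes> g [^] a2) \<otimes> h [^] b2"
    using g h by (simp add: m_assoc)
  also have "\<dots> = g [^] a1 \<otimes> (C [^] (- (b1 * a2)) \<otimes> (g [^] a2 \<otimes> h [^] b1)) \<otimes> h [^] b2"
    unfolding C_def by (simp only: int_pow_swap[OF g h])
  also have "\<dots> = C [^] (- (b1 * a2)) \<otimes> (g [^] a1 \<otimes> (g [^] a2 \<otimes> h [^] b1) \<otimes> h [^] b2)"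
    using g h C grp_center_left_commute[OF CZ, of "g [^] a1" "g [^] a2 \<otimes> h [^] b1"]
    by (simp add: m_assoc)
  also have "\<dots> = C [^] (- (b1 * a2)) \<otimes> (g [^] (a1 + a2) \<otimes> h [^] (b1 + b2))"
    using g h by (simp add: int_pow_mult m_assoc)
  finally have collect: "g [^] a1 \<otimes> h [^] b1 \<otimes> (g [^] a2 \<otimes> h [^] b2)
      = C [^] (- (b1 * a2)) \<otimes> (g [^] (a1 + a2) \<otimes> h [^] (b1 + b2))" .
  have "heis_eval G g h s \<otimes> heis_eval G g h t
      = C [^] c1 \<otimes> (g [^] a1 \<otimes> h [^] b1) \<otimes> (C [^] c2 \<otimes> (g [^] a2 \<otimes> h [^] b2))"
    by (simp add: st C_def)
  also have "\<dots> = C [^] c1 \<otimes> C [^] c2 \<otimes> (g [^] a1 \<otimes> h [^] b1 \<otimes> (g [^] a2 \<otimes> h [^] b2))"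
    using g h C grp_center_left_commute[OF CZ, of "g [^] a1 \<otimes> h [^] b1" "g [^] a2 \<otimes> h [^] b2" c2]
    by (simp add: m_assoc)
  also have "\<dots> = C [^] c1 \<otimes> C [^] c2 \<otimes> C [^] (- (b1 * a2)) \<otimes> (g [^] (a1 + a2) \<otimes> h [^] (b1 + b2))"
    using g h C by (simp add: collect m_assoc)
  also have "\<dots> = heis_eval G g h (heis_mult s t)"
    using g h C by (simp add: st C_def int_pow_mult[symmetric])
  finally show ?thesis .
qed

lemma heis_eval_inv:
  assumes g: "g \<in> carrier G" and h: "h \<in> carrier G"
  shows "inv (heis_eval G g h s) = heis_eval G g h (heis_inv s)"
proof -
  have "heis_mult (heis_inv s) s = (0, 0, 0)"
    by (cases s) (simp add: algebra_simps)
  then have "heis_eval G g h (heis_inv s) \<otimes> heis_eval G g h s = \<one>"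
    using g h by (simp add: heis_eval_mult)
  then show ?thesis
    using g h by (simp add: inv_equality)
qed

lemma heis_eval_nat_pow:
  assumes g: "g \<in> carrier G" and h: "h \<in> carrier G"
  shows "heis_eval G g h s [^] (n::nat) = heis_eval G g h (heis_pow (int n) s)"
proof (induction n)
  case 0
  then show ?case
    using g h by (cases s) (simp add: tri_def)
next
  case (Suc n)
  have "heis_mult (heis_pow (int n) s) s = heis_pow (int (Suc n)) s"
    using tri_add_one[of "int n"] by (cases s) (simp add: algebra_simps)
  then show ?case
    using Suc g h by (simp add: heis_eval_mult)
qed

lemma heis_eval_int_pow:
  assumes g: "g \<in> carrier G" and h: "h \<in> carrier G"
  shows "heis_eval G g h s [^] (k::int) = heis_eval G g h (heis_pow k s)"
proof (cases "k < 0")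
  case True
  have "heis_eval G g h s [^] k = inv (heis_eval G g h s [^] nat (- k))"
    unfolding int_pow_def2[of G _ k] using True by simp
  also have "\<dots> = heis_eval G g h (heis_inv (heis_pow (- k) s))"
    using True g h heis_eval_nat_pow[OF g h, of s "nat (- k)"]
    by (simp add: heis_eval_inv del: heis_eval.simps heis_pow.simps heis_inv.simps)
  also have "heis_inv (heis_pow (- k) s) = heis_pow k s"
    by (cases s) (simp add: tri_uminus algebra_simps)
  finally show ?thesis .
next
  case False
  then show ?thesis
    using g h heis_eval_nat_pow[OF g h, of s "nat k"] by (simp add: pow_nat del: heis_eval.simps heis_pow.simps)
qed

lemma heis_eval_commutator:
  assumes g: "g \<in> carrier G" and h: "h \<in> carrier G"
  shows "commutator G (heis_eval G g h (a1, b1, c1)) (heis_eval G g h (a2, b2, c2))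
       = heis_eval G g h (0, 0, a1 * b2 - b1 * a2)"
proof -
  have "heis_mult (heis_mult (heis_mult (a1, b1, c1) (a2, b2, c2)) (heis_inv (a1, b1, c1)))
          (heis_inv (a2, b2, c2)) = (0, 0, a1 * b2 - b1 * a2)"
    by (simp add: algebra_simps)
  then show ?thesis
    using g h unfolding commutator_def
    by (simp add: heis_eval_inv heis_eval_mult del: heis_eval.simps heis_mult.simps heis_inv.simps)
qed

lemma heis_eval_subst:
  assumes g: "g \<in> carrier G" and h: "h \<in> carrier G"
  shows "heis_eval G (heis_eval G g h s1) (heis_eval G g h s2) t = heis_eval G g h (heis_subst t s1 s2)"
proof -
  obtain a b c a1 b1 c1 a2 b2 c2 where abc: "t = (a, b, c)" "s1 = (a1, b1, c1)" "s2 = (a2, b2, c2)"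
    by (cases t, cases s1, cases s2)
  have "heis_eval G (heis_eval G g h s1) (heis_eval G g h s2) t
      = commutator G (heis_eval G g h s1) (heis_eval G g h s2) [^] c
        \<otimes> (heis_eval G g h s1 [^] a \<otimes> heis_eval G g h s2 [^] b)"
    by (simp only: abc(1) heis_eval.simps)
  also have "\<dots> = heis_eval G g h
      (heis_mult (heis_pow c (0, 0, a1 * b2 - b1 * a2)) (heis_mult (heis_pow a s1) (heis_pow b s2)))"
    using g h
    by (simp add: abc(2,3) heis_eval_commutator heis_eval_int_pow heis_eval_mult
        del: heis_eval.simps heis_pow.simps heis_mult.simps)
  also have "heis_mult (heis_pow c (0, 0, a1 * b2 - b1 * a2)) (heis_mult (heis_pow a s1) (heis_pow b s2))
      = heis_subst t s1 s2"
    by (simp add: abc algebra_simps)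
  finally show ?thesis .
qed

end

section \<open>Word images and substitutions\<close>

context group
begin

lemma word_eval_Nil [simp]: "word_eval G [] a b = \<one>"
  by (simp add: word_eval_def)

lemma word_eval_Cons [simp]: "word_eval G (l # w) a b = letter_eval G a b l \<otimes> word_eval G w a b"
  by (simp add: word_eval_def)

lemma letter_eval_closed [simp]:
  "a \<in> carrier G \<Longrightarrow> b \<in> carrier G \<Longrightarrow> letter_eval G a b l \<in> carrier G"
  by (simp add: letter_eval_def Let_def)

lemma word_eval_closed [simp]:
  "a \<in> carrier G \<Longrightarrow> b \<in> carrier G \<Longrightarrow> word_eval G w a b \<in> carrier G"
  by (induction w) auto

lemma word_eval_append:
  "a \<in> carrier G \<Longrightarrow> b \<in> carrier G \<Longrightarrow>
    word_eval G (u @ v) a b = word_eval G u a b \<otimes> word_eval G v a b"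
  by (induction u) (auto simp: m_assoc)

lemma word_eval_wpow:
  "a \<in> carrier G \<Longrightarrow> b \<in> carrier G \<Longrightarrow> word_eval G (wpow w n) a b = word_eval G w a b [^] n"
  by (induction n) (simp_all add: wpow_def word_eval_append flip: nat_pow_Suc2)

lemma word_eval_winv:
  "a \<in> carrier G \<Longrightarrow> b \<in> carrier G \<Longrightarrow> word_eval G (winv w) a b = inv (word_eval G w a b)"
proof (induction w)
  case Nil
  then show ?case
    by (simp add: winv_def)
next
  case (Cons l w)
  obtain g i where l: "l = (g, i)"
    by (cases l)
  have "winv (l # w) = winv w @ [(g, \<not> i)]"
    by (simp add: winv_def l)
  then show ?case
    using Cons by (auto simp: l word_eval_append letter_eval_def Let_def inv_mult_group)
qed

end

definition heis_image :: "('a, 'b) monoid_scheme \<Rightarrow> heis \<Rightarrow> 'a set" where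
  "heis_image G t = {heis_eval G g h t | g h. g \<in> carrier G \<and> h \<in> carrier G}"

lemma heis_image_cong:
  assumes "\<And>g h. g \<in> carrier G \<Longrightarrow> h \<in> carrier G \<Longrightarrow> heis_eval G g h t = heis_eval G g h t'"
  shows "heis_image G t = heis_image G t'"
  unfolding heis_image_def using assms by metis

lemma word_image_eq_heis_image:
  assumes "\<And>g h. g \<in> carrier G \<Longrightarrow> h \<in> carrier G \<Longrightarrow> word_eval G w g h = heis_eval G g h t"
  shows "word_image G w = heis_image G t"
  unfolding word_image_def heis_image_def using assms by metis

definition heis_subst_onto :: "('a, 'b) monoid_scheme \<Rightarrow> heis \<Rightarrow> heis \<Rightarrow> bool" where
  "heis_subst_onto G s1 s2 \<longleftrightarrow> (\<forall>u \<in> carrier G. \<forall>w \<in> carrier G.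
     \<exists>g \<in> carrier G. \<exists>h \<in> carrier G. heis_eval G g h s1 = u \<and> heis_eval G g h s2 = w)"

fun letter_coords :: "bool \<times> bool \<Rightarrow> heis" where
  "letter_coords (gen, i) = (let e = if i then - 1 else 1 in if gen then (0, e, 0) else (e, 0, 0))"

fun word_coords :: "word2 \<Rightarrow> heis" where
  "word_coords [] = (0, 0, 0)"
| "word_coords (l # w) = heis_mult (letter_coords l) (word_coords w)"

context class2_group
begin

lemma word_eval_eq_heis_eval:
  "a \<in> carrier G \<Longrightarrow> b \<in> carrier G \<Longrightarrow> word_eval G w a b = heis_eval G a b (word_coords w)"
proof (induction w)
  case (Cons l w)
  have "letter_eval G a b l = heis_eval G a b (letter_coords l)"
    using Cons.prems by (cases l) (auto simp: letter_eval_def int_pow_neg)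
  then show ?case
    using Cons by (simp add: heis_eval_mult del: heis_eval.simps)
qed simp

lemma word_image_eq_heis_image_coords: "word_image G w = heis_image G (word_coords w)"
  by (rule word_image_eq_heis_image) (rule word_eval_eq_heis_eval)

lemma word_image_power_commutator:
  "word_image G (wpow wx m @ wcomm wx (wpow wy n)) = heis_image G (int m, 0, int n)"
proof (rule word_image_eq_heis_image)
  fix g h assume g: "g \<in> carrier G" and h: "h \<in> carrier G"
  have "word_eval G (wpow wx m @ wcomm wx (wpow wy n)) g h = g [^] m \<otimes> commutator G g (h [^] n)"
    using g h
    by (simp add: wx_def wy_def wcomm_def commutator_def letter_eval_def word_eval_append
        word_eval_wpow word_eval_winv m_assoc)
  also have "\<dots> = commutator G g h [^] int n \<otimes> g [^] m"
    using g h commutator_int_pow_right[OF g h, of "int n"]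
      grp_center_commute[OF commutator_int_pow_central[OF g h, of "int n"], of "g [^] m"]
    by (simp add: int_pow_int)
  finally show "word_eval G (wpow wx m @ wcomm wx (wpow wy n)) g h = heis_eval G g h (int m, 0, int n)"
    using g h by (simp add: int_pow_int)
qed

lemma heis_imageI: "g \<in> carrier G \<Longrightarrow> h \<in> carrier G \<Longrightarrow> heis_eval G g h t \<in> heis_image G t"
  unfolding heis_image_def by blast

lemma heis_image_subst_subset: "heis_image G (heis_subst t s1 s2) \<subseteq> heis_image G t"
proof
  fix x assume "x \<in> heis_image G (heis_subst t s1 s2)"
  then obtain g h where gh: "g \<in> carrier G" "h \<in> carrier G" "x = heis_eval G g h (heis_subst t s1 s2)"
    unfolding heis_image_def by blast
  then have "x = heis_eval G (heis_eval G g h s1) (heis_eval G g h s2) t"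
    by (simp only: heis_eval_subst)
  then show "x \<in> heis_image G t"
    using gh by (simp add: heis_imageI del: heis_eval.simps)
qed

lemma heis_image_subst:
  assumes "heis_subst_onto G s1 s2"
  shows "heis_image G (heis_subst t s1 s2) = heis_image G t"
proof
  show "heis_image G t \<subseteq> heis_image G (heis_subst t s1 s2)"
  proof
    fix x assume "x \<in> heis_image G t"
    then obtain u w where uw: "u \<in> carrier G" "w \<in> carrier G" "x = heis_eval G u w t"
      unfolding heis_image_def by blast
    then obtain g h where gh: "g \<in> carrier G" "h \<in> carrier G"
        "heis_eval G g h s1 = u" "heis_eval G g h s2 = w"
      using assms unfolding heis_subst_onto_def by blast
    then have "x = heis_eval G g h (heis_subst t s1 s2)"
      using uw(3) by (simp flip: heis_eval_subst del: heis_eval.simps)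
    then show "x \<in> heis_image G (heis_subst t s1 s2)"
      using gh(1,2) by (simp add: heis_imageI del: heis_eval.simps)
  qed
qed (rule heis_image_subst_subset)

lemma heis_subst_onto_of_inverse:
  assumes "heis_subst s1 r1 r2 = (1, 0, 0)" "heis_subst s2 r1 r2 = (0, 1, 0)"
  shows "heis_subst_onto G s1 s2"
  unfolding heis_subst_onto_def
proof (intro ballI)
  fix u w assume "u \<in> carrier G" "w \<in> carrier G"
  then show "\<exists>g \<in> carrier G. \<exists>h \<in> carrier G. heis_eval G g h s1 = u \<and> heis_eval G g h s2 = w"
    by (intro bexI[of _ "heis_eval G u w r1"] bexI[of _ "heis_eval G u w r2"])
      (simp_all add: heis_eval_subst assms del: heis_eval.simps heis_subst.simps)
qed

lemma heis_subst_onto_unimodular: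
  assumes "a1 * b2 - b1 * a2 = 1"
  obtains c1 c2 where "heis_subst_onto G (a1, b1, c1) (a2, b2, c2)"
proof -
  define r1 r2 where "r1 = (b2, - b1, 0::int)" and "r2 = (- a2, a1, 0::int)"
  define c1 where "c1 = - snd (snd (heis_subst (a1, b1, 0) r1 r2))"
  define c2 where "c2 = - snd (snd (heis_subst (a2, b2, 0) r1 r2))"
  have "heis_subst (a1, b1, c1) r1 r2 = (1, 0, 0)" "heis_subst (a2, b2, c2) r1 r2 = (0, 1, 0)"
    using assms by (simp_all add: r1_def r2_def c1_def c2_def algebra_simps)
  then show thesis
    by (rule that[OF heis_subst_onto_of_inverse])
qed

lemma heis_image_reduce_gcd: "\<exists>c'. heis_image G (a, b, c) = heis_image G (gcd a b, 0, c')"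
proof -
  define d where "d = gcd a b"
  obtain a' b' p q where abpq: "a = d * a'" "b = d * b'" "a' * p + b' * q = 1"
    unfolding d_def by (rule gcd_cofactors)
  then obtain c1 c2 where onto: "heis_subst_onto G (p, - b', c1) (q, a', c2)"
    using heis_subst_onto_unimodular[of p a' "- b'" q] by (auto simp: algebra_simps)
  have "fst (heis_subst (a, b, c) (p, - b', c1) (q, a', c2)) = d * (a' * p + b' * q)"
    "fst (snd (heis_subst (a, b, c) (p, - b', c1) (q, a', c2))) = 0"
    using abpq(1,2) by (simp_all add: algebra_simps)
  then show ?thesis
    using heis_image_subst[OF onto, of "(a, b, c)"] abpq(3) unfolding d_def by (metis prod.collapse mult_1_right)
qed

end

section \<open>Finite groups of class 2\<close>

locale finite_class2_group = class2_group +
  assumes finite_carrier: "finite (carrier G)"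
begin

lemma grp_exp_pos: "0 < grp_exp G"
  and pow_grp_exp: "g \<in> carrier G \<Longrightarrow> g [^] grp_exp G = \<one>"
  using grp_exp_finite[OF finite_carrier] by auto

lemma derived_subset_carrier: "derived G (carrier G) \<subseteq> carrier G"
  using derived_subset_center grp_center_subset by blast

lemma grp_exp_derived_pos: "0 < grp_exp (G\<lparr>carrier := derived G (carrier G)\<rparr>)"
  and pow_grp_exp_derived:
    "x \<in> derived G (carrier G) \<Longrightarrow> x [^] grp_exp (G\<lparr>carrier := derived G (carrier G)\<rparr>) = \<one>"
  using grp_exp_least[OF grp_exp_pos, of "G\<lparr>carrier := derived G (carrier G)\<rparr>"]
    pow_grp_exp derived_subset_carrier
  by (auto simp: nat_pow_carrier_update)

lemma pow_grp_exp_derived_central: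
  assumes h: "h \<in> carrier G"
  shows "h [^] grp_exp (G\<lparr>carrier := derived G (carrier G)\<rparr>) \<in> grp_center G"
  unfolding grp_center_iff_commutator
proof (intro conjI ballI)
  fix g assume g: "g \<in> carrier G"
  show "commutator G g (h [^] grp_exp (G\<lparr>carrier := derived G (carrier G)\<rparr>)) = \<one>"
    using commutator_nat_pow_right[OF g h] pow_grp_exp_derived[OF commutator_in_derived[OF g h]]
    by simp
qed (simp add: h)

lemma grp_exp_center_quotient_pos: "0 < grp_exp (G Mod grp_center G)"
  and pow_grp_exp_center_quotient: "h \<in> carrier G \<Longrightarrow> h [^] grp_exp (G Mod grp_center G) \<in> grp_center G"
  and grp_exp_center_quotient_le:
    "grp_exp (G Mod grp_center G) \<le> grp_exp (G\<lparr>carrier := derived G (carrier G)\<rparr>)"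
  using grp_exp_FactGroup[OF normal_grp_center grp_exp_derived_pos] pow_grp_exp_derived_central
  by auto

lemma commutator_pow_grp_exp_center_quotient:
  assumes g: "g \<in> carrier G" and h: "h \<in> carrier G"
  shows "commutator G g h [^] grp_exp (G Mod grp_center G) = \<one>"
proof -
  have "commutator G g (h [^] grp_exp (G Mod grp_center G)) = \<one>"
    using pow_grp_exp_center_quotient[OF h] g by (simp add: grp_center_iff_commutator)
  then show ?thesis
    by (simp add: commutator_nat_pow_right[OF g h])
qed

lemma heis_subst_onto_pow_x:
  assumes "coprime k (int (grp_exp G))"
  shows "heis_subst_onto G (k, 0, 0) (0, 1, 0)"
  unfolding heis_subst_onto_def
proof (intro ballI)
  fix u w assume u: "u \<in> carrier G" and w: "w \<in> carrier G"
  obtain g where "g \<in> carrier G" "g [^] k = u"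
    using int_pow_root_exists[OF _ assms u] pow_grp_exp by blast
  then show "\<exists>g \<in> carrier G. \<exists>h \<in> carrier G. heis_eval G g h (k, 0, 0) = u \<and> heis_eval G g h (0, 1, 0) = w"
    using w by auto
qed

lemma heis_subst_onto_pow_y:
  assumes "coprime k (int (grp_exp G))"
  shows "heis_subst_onto G (1, 0, 0) (0, k, 0)"
  unfolding heis_subst_onto_def
proof (intro ballI)
  fix u w assume u: "u \<in> carrier G" and w: "w \<in> carrier G"
  obtain h where "h \<in> carrier G" "h [^] k = w"
    using int_pow_root_exists[OF _ assms w] pow_grp_exp by blast
  then show "\<exists>g \<in> carrier G. \<exists>h \<in> carrier G. heis_eval G g h (1, 0, 0) = u \<and> heis_eval G g h (0, k, 0) = w"
    using u by auto
qed

lemma heis_image_reduce_x_exponent: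
  "\<exists>c'. heis_image G (a, 0, c) = heis_image G (gcd a (int (grp_exp G)), 0, c')"
proof -
  obtain k where k: "coprime k (int (grp_exp G))" "int (grp_exp G) dvd a * k - gcd a (int (grp_exp G))"
    using exists_coprime_multiplier_gcd grp_exp_pos by (meson of_nat_0_less_iff)
  have "heis_image G (a, 0, c) = heis_image G (a * k, 0, c * k)"
    using heis_image_subst[OF heis_subst_onto_pow_x[OF k(1)], of "(a, 0, c)"] by simp
  also have "\<dots> = heis_image G (gcd a (int (grp_exp G)), 0, c * k)"
  proof (rule heis_image_cong)
    fix g h assume "g \<in> carrier G" "h \<in> carrier G"
    then show "heis_eval G g h (a * k, 0, c * k) = heis_eval G g h (gcd a (int (grp_exp G)), 0, c * k)"
      using int_pow_eq_mod[OF _ pow_grp_exp k(2)] by simp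
  qed
  finally show ?thesis
    by blast
qed

lemma heis_image_reduce_commutator_exponent:
  "heis_image G (a, 0, c) = heis_image G (a, 0, gcd c (int (grp_exp (G Mod grp_center G))))"
proof -
  obtain k where k: "coprime k (int (grp_exp G))"
    "int (grp_exp (G Mod grp_center G)) dvd c * k - gcd c (int (grp_exp (G Mod grp_center G)))"
    using exists_coprime_multiplier_gcd grp_exp_pos grp_exp_center_quotient_pos by (meson of_nat_0_less_iff)
  have "heis_image G (a, 0, c) = heis_image G (a, 0, c * k)"
    using heis_image_subst[OF heis_subst_onto_pow_y[OF k(1)], of "(a, 0, c)"] by simp
  also have "\<dots> = heis_image G (a, 0, gcd c (int (grp_exp (G Mod grp_center G))))"
  proof (rule heis_image_cong)
    fix g h assume gh: "g \<in> carrier G" "h \<in> carrier G"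
    then show "heis_eval G g h (a, 0, c * k) = heis_eval G g h (a, 0, gcd c (int (grp_exp (G Mod grp_center G))))"
      using int_pow_eq_mod[OF _ commutator_pow_grp_exp_center_quotient[OF gh] k(2)] by simp
  qed
  finally show ?thesis .
qed

lemma heis_image_normal_form:
  "\<exists>m n. m dvd grp_exp G \<and> n dvd grp_exp (G Mod grp_center G)
     \<and> n \<le> grp_exp (G\<lparr>carrier := derived G (carrier G)\<rparr>)
     \<and> heis_image G t = heis_image G (int m, 0, int n)"
proof -
  define e f where "e = int (grp_exp G)" and "f = int (grp_exp (G Mod grp_center G))"
  obtain a b c where t: "t = (a, b, c)"
    by (cases t)
  obtain c1 where 1: "heis_image G (a, b, c) = heis_image G (gcd a b, 0, c1)"
    using heis_image_reduce_gcd by blast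
  obtain c2 where 2: "heis_image G (gcd a b, 0, c1) = heis_image G (gcd (gcd a b) e, 0, c2)"
    unfolding e_def using heis_image_reduce_x_exponent by blast
  have 3: "heis_image G (gcd (gcd a b) e, 0, c2) = heis_image G (gcd (gcd a b) e, 0, gcd c2 f)"
    unfolding f_def by (rule heis_image_reduce_commutator_exponent)
  have "gcd c2 f \<le> f"
    by (rule zdvd_imp_le) (simp_all add: f_def grp_exp_center_quotient_pos)
  then have "nat (gcd c2 f) \<le> grp_exp (G\<lparr>carrier := derived G (carrier G)\<rparr>)"
    using grp_exp_center_quotient_le unfolding f_def by linarith
  moreover have "nat (gcd (gcd a b) e) dvd grp_exp G" "nat (gcd c2 f) dvd grp_exp (G Mod grp_center G)"
    unfolding e_def f_def by (simp_all add: nat_dvd_iff)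
  moreover have "heis_image G t = heis_image G (int (nat (gcd (gcd a b) e)), 0, int (nat (gcd c2 f)))"
    using t 1 2 3 by simp
  ultimately show ?thesis
    by blast
qed

end

theorem theorem3p7:
  fixes G :: "('a, 'b) monoid_scheme"
  assumes "group G"
    and "finite (carrier G)"
    and "derived G (carrier G) \<subseteq> grp_center G"
  shows "exhaustive2 G
           {wpow wx m @ wcomm wx (wpow wy n) | m n.
              m dvd grp_exp G
            \<and> n dvd grp_exp (G Mod (grp_center G))
            \<and> n \<le> grp_exp (G\<lparr>carrier := derived G (carrier G)\<rparr>)}"
  unfolding exhaustive2_def
proof
  fix v
  interpret finite_class2_group G
    using assms by (simp add: finite_class2_group_def class2_group_def class2_group_axioms_def
        finite_class2_group_axioms_def)
  obtain m n where mn: "m dvd grp_exp G" "n dvd grp_exp (G Mod grp_center G)"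
    "n \<le> grp_exp (G\<lparr>carrier := derived G (carrier G)\<rparr>)"
    "heis_image G (word_coords v) = heis_image G (int m, 0, int n)"
    using heis_image_normal_form by blast
  then have "word_image G v = word_image G (wpow wx m @ wcomm wx (wpow wy n))"
    by (simp only: word_image_eq_heis_image_coords[of v] word_image_power_commutator)
  with mn show "\<exists>w \<in> {wpow wx m @ wcomm wx (wpow wy n) | m n.
              m dvd grp_exp G
            \<and> n dvd grp_exp (G Mod (grp_center G))
            \<and> n \<le> grp_exp (G\<lparr>carrier := derived G (carrier G)\<rparr>)}. word_image G v = word_image G w"
    by blast
qed

end
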